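(* For every $a>0$ and $\alpha>0$, the second Robin eigenvalue of an interval $I_a$ of length $a$ satisfies \[ \frac{\big(2\pi-a\alpha+\sqrt{4\pi^2+12a\alpha\pi+\alpha^2a^2}\big)^2}{16a^2}\le\lambda_2(I_a,\alpha) \] and \[ \lambda_2(I_a,\alpha)\le\begin{cases}\Big(\dfrac{\pi}{2a}+\sqrt{\dfrac{\pi^2}{4a^2}+\dfrac{2\alpha}{a}}\Big)^2, & a\alpha\le\dfrac{\pi^2}{2},\\[2ex] \dfrac{\pi^2}{16a^4\alpha^2}\Big(4a\alpha-\pi^2+\sqrt{\pi^4+16a^2\alpha^2}\Big)^2, & a\alpha\ge\dfrac{\pi^2}{2}.\end{cases} \]
   Context: For an interval $I_a\subset\mathbb{R}$ of length $a>0$ and $\alpha>0$, $\lambda_1(I_a,\alpha)<\lambda_2(I_a,\alpha)<\cdots$ denote the eigenvalues of the Robin problem $-u''=\lambda u$ on $I_a$ with $\partial_\nu u+\alpha u=0$ at both endpoints ($\partial_\nu$ the outward derivative). Equivalently, $\lambda_2(I_a,\alpha)$ is the smallest root in $(\pi^2/a^2,4\pi^2/a^2)$ of $\alpha=-\sqrt\lambda\cot(a\sqrt\lambda/2)$. *)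

theory Defs
  imports "HOL-Analysis.Analysis"
begin

text \<open>Robin eigenvalue problem on the interval I = [c, c+a]:
  -u'' = lam u on I, with outward-derivative Robin condition
  d_nu u + alpha u = 0 at both endpoints, i.e.
  -u'(c) + alpha u(c) = 0 and u'(c+a) + alpha u(c+a) = 0.
  Eigenfunctions are classical C^2 functions on the closed interval
  (one-sided derivatives at the endpoints), not identically zero.\<close>

definition robin_eigenvalue :: "real \<Rightarrow> real \<Rightarrow> real \<Rightarrow> real \<Rightarrow> bool" where
  "robin_eigenvalue c a alpha lam \<longleftrightarrow>
     (\<exists>u u' u''. (\<exists>x\<in>{c..c+a}. u x \<noteq> 0) \<and>
        (\<forall>x\<in>{c..c+a}. (u has_real_derivative u' x) (at x within {c..c+a})) \<and>
        (\<forall>x\<in>{c..c+a}. (u' has_real_derivative u'' x) (at x within {c..c+a})) \<and>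
        continuous_on {c..c+a} u'' \<and>
        (\<forall>x\<in>{c..c+a}. - u'' x = lam * u x) \<and>
        - u' c + alpha * u c = 0 \<and>
        u' (c + a) + alpha * u (c + a) = 0)"

text \<open>lambda_k with eigenvalues listed increasingly (1D Robin eigenvalues are simple):
  lambda_2 is the eigenvalue having exactly one eigenvalue strictly below it.\<close>

definition robin_lambda2 :: "real \<Rightarrow> real \<Rightarrow> real \<Rightarrow> real" where
  "robin_lambda2 c a alpha =
     (THE lam. robin_eigenvalue c a alpha lam \<and>
        card {mu. robin_eigenvalue c a alpha mu \<and> mu < lam} = 1)"

end

theory Submission
  imports Defs
begin

text \<open>Writing an eigenvalue as \<open>(2h/a)^2\<close> with \<open>h > 0\<close>, the eigenfunction is a solution of
  \<open>u'' = -(2h/a)^2 u\<close>, and the Robin conditions at both ends reduce to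
  \<open>(b cos h - h sin h) (b sin h + h cos h) = 0\<close> with \<open>b = a alpha / 2\<close>; the two factors belong
  to eigenfunctions that are symmetric resp. antisymmetric about the midpoint. Non-positive numbers
  are not eigenvalues, and on \<open>(0, pi)\<close> the first factor vanishes only at some \<open>h < pi/2\<close> and
  the second only at \<open>h = pi/2 + r\<close> with \<open>0 < r < pi/2\<close>. Hence
  \<open>lambda_2 = ((pi + 2r)/a)^2\<close>, where \<open>a alpha cos r = (pi + 2r) sin r\<close>.
  Inserting the elementary estimates \<open>r \<le> tan r\<close>, \<open>tan r \<le> 4r/(pi - 2r)\<close> and
  \<open>pi^3 r \<le> (pi + 2r)(pi^2 - 4r^2) tan r\<close> on \<open>(0, pi/2)\<close> into this relation yields quadratic
  inequalities for \<open>pi + 2r\<close>, whose solutions are the stated bounds.\<close>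

lemma cos_ge_1_minus_sq_div_2:
  fixes x :: real assumes "0 \<le> x" shows "1 - x^2/2 \<le> cos x"
proof -
  have "cos 0 - 1 + 0^2/2 \<le> cos x - 1 + x^2/2"
  proof (rule deriv_nonneg_imp_mono[OF _ _ assms])
    fix y :: real assume "y \<in> {0..x}"
    then show "0 \<le> y - sin y" using sin_x_le_x by simp
  qed (auto intro!: derivative_eq_intros)
  then show ?thesis by simp
qed

lemma sin_ge_x_minus_cube_div_6:
  fixes x :: real assumes "0 \<le> x" shows "x - x^3/6 \<le> sin x"
proof -
  have "sin 0 - 0 + 0^3/6 \<le> sin x - x + x^3/6"
  proof (rule deriv_nonneg_imp_mono[OF _ _ assms])
    fix y :: real assume "y \<in> {0..x}"
    then show "0 \<le> cos y - 1 + y^2/2" using cos_ge_1_minus_sq_div_2[of y] by simp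
  qed (auto intro!: derivative_eq_intros simp: power2_eq_square)
  then show ?thesis by simp
qed

lemma x_cos_le_sin:
  fixes x :: real assumes "0 \<le> x" "x \<le> pi" shows "x * cos x \<le> sin x"
proof -
  have "sin 0 - 0 * cos 0 \<le> sin x - x * cos x"
  proof (rule deriv_nonneg_imp_mono[OF _ _ assms(1)])
    fix y :: real assume "y \<in> {0..x}"
    then show "0 \<le> y * sin y" using assms by (simp add: sin_ge_zero)
  qed (auto intro!: derivative_eq_intros simp: algebra_simps)
  then show ?thesis by simp
qed

lemma x_cos_le_sin_refined:
  fixes x :: real assumes "0 \<le> x" "x \<le> pi" shows "x * cos x \<le> (1 - x^2/3) * sin x"
proof -
  have "(1 - 0^2/3) * sin 0 - 0 * cos 0 \<le> (1 - x^2/3) * sin x - x * cos x"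
  proof (rule deriv_nonneg_imp_mono[OF _ _ assms(1)])
    fix y :: real assume "y \<in> {0..x}"
    then show "0 \<le> y/3 * (sin y - y * cos y)" using assms x_cos_le_sin[of y] by simp
  qed (auto intro!: derivative_eq_intros simp: algebra_simps power2_eq_square)
  then show ?thesis by simp
qed

lemma pi_half_minus_x_sin_le_2x_cos:
  fixes r :: real assumes r: "0 < r" "r < pi/2"
  shows "(pi/2 - r) * sin r \<le> 2 * r * cos r"
proof (cases "r \<le> 1.3")
  case True
  have "(r - 1.3) * (r + 0.3) \<le> 0" using True r by (intro mult_nonpos_nonneg) auto
  then have "pi/2 - r \<le> 2 - r^2" using pi_approx by (simp add: algebra_simps power2_eq_square)
  then have "r * (pi/2 - r) \<le> r * (2 - r^2)" using r by (intro mult_left_mono) auto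
  then have poly: "(pi/2 - r) * r \<le> 2 * r * (1 - r^2/2)" by (simp add: algebra_simps)
  have "(pi/2 - r) * sin r \<le> (pi/2 - r) * r" using sin_x_le_x r by (intro mult_left_mono) auto
  also have "\<dots> \<le> 2 * r * (1 - r^2/2)" by (rule poly)
  also have "\<dots> \<le> 2 * r * cos r" using cos_ge_1_minus_sq_div_2 r by (intro mult_left_mono) auto
  finally show ?thesis .
next
  case False
  define s where "s = pi/2 - r"
  have s: "0 < s" "s \<le> 0.28" using r False pi_approx by (auto simp: s_def)
  have "s * s \<le> 0.28 * 0.28" using s by (intro mult_mono) auto
  then have "2 * 1.3 * 0.98 \<le> 2 * r * (1 - s^2/6)" using False by (intro mult_mono) (auto simp: power2_eq_square)
  then have "s * 1 \<le> s * (2 * r * (1 - s^2/6))" using s by (intro mult_left_mono) auto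
  then have poly: "s \<le> 2 * r * (s - s^3/6)" by (simp add: algebra_simps power2_eq_square power3_eq_cube)
  have "(pi/2 - r) * sin r \<le> s" using s by (simp add: s_def mult_left_le)
  also have "\<dots> \<le> 2 * r * (s - s^3/6)" by (rule poly)
  also have "\<dots> \<le> 2 * r * sin s" using sin_ge_x_minus_cube_div_6 s r by (intro mult_left_mono) auto
  also have "\<dots> = 2 * r * cos r" by (simp add: s_def sin_cos_eq)
  finally show ?thesis .
qed

lemma pi_cube_poly_le:
  fixes r :: real assumes r: "0 \<le> r" "r \<le> 0.4 * pi"
  shows "pi^3 * (1 - r^2/3) \<le> (pi + 2*r) * (pi^2 - 4*r^2)"
proof -
  have "9.6 \<le> pi^2" using mult_mono[of "3.1" pi "3.1" pi] pi_approx by (simp add: power2_eq_square)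
  then have "pi * r * 9.6 \<le> pi * r * pi^2" using r by (intro mult_left_mono) auto
  then have "16/5 * pi * r \<le> pi^3 * r / 3" by (simp add: algebra_simps power2_eq_square power3_eq_cube)
  moreover have "4/5 * pi * r \<le> 8/25 * pi^2" using r by (simp add: power2_eq_square)
  moreover have "8 * r^2 \<le> 32/25 * pi^2" using r power_mono[of r "0.4 * pi" 2] by (simp add: power2_eq_square)
  ultimately have "0 \<le> r * (2*pi^2 - 4*pi*r - 8*r^2 + pi^3*r/3)" using r \<open>9.6 \<le> pi^2\<close> by simp
  also have "\<dots> = (pi + 2*r) * (pi^2 - 4*r^2) - pi^3 * (1 - r^2/3)"
    by (simp add: algebra_simps power2_eq_square power3_eq_cube)
  finally show ?thesis by simp
qed

lemma pi_cube_x_cos_le_poly_sin: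
  fixes r :: real assumes r: "0 < r" "r < pi/2"
  shows "pi^3 * r * cos r \<le> (pi + 2*r) * (pi^2 - 4*r^2) * sin r"
proof (cases "r \<le> 0.4 * pi")
  \<comment> \<open>The refined Taylor estimate at \<open>0\<close> is too weak near \<open>pi/2\<close>; there we expand in \<open>pi/2 - r\<close>.\<close>
  case True
  have "pi^3 * r * cos r \<le> pi^3 * ((1 - r^2/3) * sin r)"
    using x_cos_le_sin_refined[of r] r by (simp add: mult.assoc)
  also have "\<dots> \<le> (pi + 2*r) * (pi^2 - 4*r^2) * sin r"
    using pi_cube_poly_le[of r] True r sin_gt_zero[of r] by (simp add: mult_right_mono)
  finally show ?thesis .
next
  case False
  define s where "s = pi/2 - r"
  have s: "0 < s" "s < 0.1 * pi" using r False by (auto simp: s_def)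
  have pi2: "pi^2 \<le> 10.24" using mult_mono[of pi "3.2" pi "3.2"] pi_approx by (simp add: power2_eq_square)
  have "s^2 \<le> (0.1 * pi)^2" using s by (intro power_mono) auto
  then have "s^2 \<le> 0.11" using pi2 by (simp add: power_divide)
  then have cos_s: "0.94 \<le> cos s" using cos_ge_1_minus_sq_div_2[of s] s by simp
  have "(0.9 * pi)^2 \<le> (pi - s)^2" using s by (intro power_mono) auto
  then have "0.81 * pi^2 \<le> (pi - s)^2" by (simp add: power_divide power_mult_distrib)
  then have "0.81 * pi^2 * 0.94 \<le> (pi - s)^2 * cos s" using cos_s by (intro mult_mono) auto
  then have poly: "pi^2 * (pi^2/2) \<le> 8 * (pi - s)^2 * cos s"
    using pi2 mult_left_mono[of "pi^2/2" "6.0912" "pi^2"] by simp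
  have "pi^3 * r * cos r = pi^3 * r * sin s" by (simp add: s_def sin_cos_eq)
  also have "\<dots> \<le> pi^3 * (pi/2) * s"
    using r s sin_x_le_x[of s] sin_ge_zero[of s] by (intro mult_mono) auto
  also have "\<dots> = s * (pi^2 * (pi^2/2))" by (simp add: power2_eq_square power3_eq_cube)
  also have "\<dots> \<le> s * (8 * (pi - s)^2 * cos s)" using poly s by (intro mult_left_mono) auto
  also have "\<dots> = (pi + 2*r) * (pi^2 - 4*r^2) * sin r"
    by (simp add: s_def cos_sin_eq algebra_simps power2_eq_square)
  finally show ?thesis .
qed

lemma mono_on_Icc_if_deriv_within_nonneg:
  fixes f :: "real \<Rightarrow> real"
  assumes deriv: "\<And>x. x \<in> {a..b} \<Longrightarrow> (f has_real_derivative f' x) (at x within {a..b})"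
    and nonneg: "\<And>x. x \<in> {a..b} \<Longrightarrow> 0 \<le> f' x"
    and xy: "a \<le> x" "x \<le> y" "y \<le> b"
  shows "f x \<le> f y"
proof (rule DERIV_nonneg_imp_increasing_open[OF xy(2)])
  fix z assume z: "x < z" "z < y"
  then have "at z within {a..b} = at z" using xy by (intro at_within_Icc_at) auto
  then show "\<exists>d. (f has_real_derivative d) (at z) \<and> 0 \<le> d"
    using deriv[of z] nonneg[of z] z xy by auto
next
  have "continuous_on {a..b} f" using deriv by (rule DERIV_continuous_on)
  then show "continuous_on {x..y} f" by (rule continuous_on_subset) (use xy in auto)
qed

lemma robin_eigenvalueE:
  assumes "robin_eigenvalue c a alpha lam"
  obtains u u' where "\<exists>x\<in>{c..c+a}. u x \<noteq> 0"
    "\<And>x. x \<in> {c..c+a} \<Longrightarrow> (u has_real_derivative u' x) (at x within {c..c+a})"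
    "\<And>x. x \<in> {c..c+a} \<Longrightarrow> (u' has_real_derivative - (lam * u x)) (at x within {c..c+a})"
    "u' c = alpha * u c" "u' (c + a) = - (alpha * u (c + a))"
proof -
  obtain u u' u'' where u: "\<exists>x\<in>{c..c+a}. u x \<noteq> 0"
    "\<forall>x\<in>{c..c+a}. (u has_real_derivative u' x) (at x within {c..c+a})"
    "\<forall>x\<in>{c..c+a}. (u' has_real_derivative u'' x) (at x within {c..c+a})"
    "\<forall>x\<in>{c..c+a}. - u'' x = lam * u x"
    "- u' c + alpha * u c = 0" "u' (c + a) + alpha * u (c + a) = 0"
    using assms unfolding robin_eigenvalue_def by blast
  show thesis
  proof (rule that[of u u'])
    fix x assume x: "x \<in> {c..c+a}"
    then have "u'' x = - (lam * u x)" using u(4) by (metis minus_minus)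
    then show "(u' has_real_derivative - (lam * u x)) (at x within {c..c+a})" using u(3) x by metis
  qed (use u in auto)
qed

lemma robin_eigenvalue_pos:
  assumes "a > 0" "alpha > 0" "robin_eigenvalue c a alpha lam"
  shows "lam > 0"
proof (rule ccontr)
  assume "\<not> lam > 0"
  obtain u u' where nz: "\<exists>x\<in>{c..c+a}. u x \<noteq> 0"
    and u: "\<And>x. x \<in> {c..c+a} \<Longrightarrow> (u has_real_derivative u' x) (at x within {c..c+a})"
    and u': "\<And>x. x \<in> {c..c+a} \<Longrightarrow> (u' has_real_derivative - (lam * u x)) (at x within {c..c+a})"
    and bc: "u' c = alpha * u c" "u' (c + a) = - (alpha * u (c + a))"
    using robin_eigenvalueE[OF assms(3)] by blast
  have ends: "c \<in> {c..c+a}" "c + a \<in> {c..c+a}" using assms(1) by auto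
  define g where "g x = u x * u' x" for x
  have "(g has_real_derivative (u' x)^2 - lam * (u x)^2) (at x within {c..c+a})"
    if "x \<in> {c..c+a}" for x
    unfolding g_def using u[OF that] u'[OF that]
    by (auto intro!: derivative_eq_intros simp: power2_eq_square algebra_simps)
  moreover have "0 \<le> (u' x)^2 - lam * (u x)^2" for x
    using \<open>\<not> lam > 0\<close> mult_nonpos_nonneg[of lam "(u x)^2"] by (smt (verit) zero_le_power2)
  ultimately have g_mono: "g x \<le> g y" if "x \<in> {c..c+a}" "y \<in> {c..c+a}" "x \<le> y" for x y
    using mono_on_Icc_if_deriv_within_nonneg[of c "c + a" g "\<lambda>x. (u' x)^2 - lam * (u x)^2"] that
    by auto
  \<comment> \<open>The Robin conditions give \<open>g c \<ge> 0 \<ge> g (c + a)\<close>, so the nondecreasing \<open>g = u u'\<close> vanishes.\<close>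
  have "alpha * (u c)^2 + alpha * (u (c + a))^2 \<le> 0"
    using g_mono[OF ends] assms(1) bc by (simp add: g_def power2_eq_square algebra_simps)
  moreover have "0 \<le> alpha * (u c)^2" "0 \<le> alpha * (u (c + a))^2" using assms(2) by simp_all
  ultimately have "alpha * (u c)^2 = 0" "alpha * (u (c + a))^2 = 0" by linarith+
  then have uc: "u c = 0" and "g c = 0" "g (c + a) = 0" using assms(2) bc by (simp_all add: g_def)
  then have g0: "g x = 0" if "x \<in> {c..c+a}" for x
    using g_mono[OF ends(1) that] g_mono[OF that ends(2)] that by auto
  have "((\<lambda>x. u x * u x) has_real_derivative 2 * g x) (at x within {c..c+a})"
    if "x \<in> {c..c+a}" for x
    using u[OF that] by (auto intro!: derivative_eq_intros simp: g_def)
  then have "((\<lambda>x. u x * u x) has_real_derivative 0) (at x within {c..c+a})"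
    if "x \<in> {c..c+a}" for x using g0[OF that] that by fastforce
  then obtain C where "\<forall>x\<in>{c..c+a}. u x * u x = C"
    using has_field_derivative_zero_constant[of "{c..c+a}" "\<lambda>x. u x * u x"] by auto
  then have "u x = 0" if "x \<in> {c..c+a}" for x using that ends uc by (metis mult_eq_0_iff)
  then show False using nz by blast
qed

lemma harmonic_oscillator_solution:
  fixes u u' :: "real \<Rightarrow> real"
  assumes k: "k \<noteq> 0" and S: "convex S" "c \<in> S"
    and u: "\<And>x. x \<in> S \<Longrightarrow> (u has_real_derivative u' x) (at x within S)"
    and u': "\<And>x. x \<in> S \<Longrightarrow> (u' has_real_derivative - (k^2 * u x)) (at x within S)"
    and x: "x \<in> S"
  shows "u x = u c * cos (k * (x - c)) + u' c / k * sin (k * (x - c))"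
    and "u' x = - u c * k * sin (k * (x - c)) + u' c * cos (k * (x - c))"
proof -
  define w where "w x = u x - (u c * cos (k * (x - c)) + u' c / k * sin (k * (x - c)))" for x
  define w' where "w' x = u' x - (- u c * k * sin (k * (x - c)) + u' c * cos (k * (x - c)))" for x
  have w: "(w has_real_derivative w' x) (at x within S)" if "x \<in> S" for x
    unfolding w_def w'_def using k u[OF that]
    by (auto intro!: derivative_eq_intros simp: algebra_simps)
  have w': "(w' has_real_derivative - (k^2 * w x)) (at x within S)" if "x \<in> S" for x
    unfolding w_def w'_def using k u'[OF that]
    by (auto intro!: derivative_eq_intros simp: algebra_simps power2_eq_square)
  \<comment> \<open>The energy of the difference \<open>w\<close> is conserved and vanishes at \<open>c\<close>.\<close>
  define E where "E x = (w' x)^2 + k^2 * (w x)^2" for x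
  have "(E has_real_derivative 0) (at x within S)" if "x \<in> S" for x
    unfolding E_def using w[OF that] w'[OF that]
    by (auto intro!: derivative_eq_intros simp: algebra_simps)
  then obtain C where "\<forall>x\<in>S. E x = C"
    using has_field_derivative_zero_constant[OF S(1), of E] by auto
  moreover have "E c = 0" using k by (simp add: E_def w_def w'_def)
  ultimately have "(w' x)^2 + k^2 * (w x)^2 = 0" using S(2) x by (auto simp: E_def)
  then have "w x = 0" "w' x = 0" using k by (simp_all add: add_nonneg_eq_0_iff)
  then show "u x = u c * cos (k * (x - c)) + u' c / k * sin (k * (x - c))"
    and "u' x = - u c * k * sin (k * (x - c)) + u' c * cos (k * (x - c))"
    by (simp_all add: w_def w'_def)
qed

lemma robin_eigenvalue_sq_iff:
  assumes a: "0 \<le> a" and k: "0 < k"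
  shows "robin_eigenvalue c a alpha (k^2) \<longleftrightarrow>
           (alpha^2 - k^2) * sin (k * a) + 2 * alpha * k * cos (k * a) = 0"
    (is "_ \<longleftrightarrow> ?char = 0")
proof
  assume "robin_eigenvalue c a alpha (k^2)"
  then obtain u u' where nz: "\<exists>x\<in>{c..c+a}. u x \<noteq> 0"
    and u: "\<And>x. x \<in> {c..c+a} \<Longrightarrow> (u has_real_derivative u' x) (at x within {c..c+a})"
    and u': "\<And>x. x \<in> {c..c+a} \<Longrightarrow> (u' has_real_derivative - (k^2 * u x)) (at x within {c..c+a})"
    and bc: "u' c = alpha * u c" "u' (c + a) = - (alpha * u (c + a))"
    using robin_eigenvalueE by blast
  have sol: "u x = u c * cos (k * (x - c)) + u' c / k * sin (k * (x - c))"
    "u' x = - u c * k * sin (k * (x - c)) + u' c * cos (k * (x - c))" if "x \<in> {c..c+a}" for x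
    using harmonic_oscillator_solution[of k "{c..c+a}" c u u' x] u u' that k a by auto
  have "u c \<noteq> 0"
  proof
    assume "u c = 0"
    then have "u x = 0" if "x \<in> {c..c+a}" for x using sol(1)[OF that] bc by simp
    then show False using nz by blast
  qed
  have ends: "u (c + a) = u c * (cos (k * a) + alpha / k * sin (k * a))"
    "u' (c + a) = u c * (- k * sin (k * a) + alpha * cos (k * a))"
    using sol[of "c + a"] a bc(1) by (simp_all add: algebra_simps)
  have "u c * ?char = k * (u' (c + a) + alpha * u (c + a))"
    unfolding ends using k by (simp add: field_simps power2_eq_square)
  also have "\<dots> = 0" using bc(2) by simp
  finally show "?char = 0" using \<open>u c \<noteq> 0\<close> by simp
next
  assume char: "?char = 0"
  show "robin_eigenvalue c a alpha (k^2)"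
    unfolding robin_eigenvalue_def
  proof (intro exI conjI)
    let ?u = "\<lambda>x. cos (k * (x - c)) + alpha / k * sin (k * (x - c))"
    let ?u' = "\<lambda>x. - k * sin (k * (x - c)) + alpha * cos (k * (x - c))"
    let ?u'' = "\<lambda>x. - (k^2 * ?u x)"
    show "\<exists>x\<in>{c..c+a}. ?u x \<noteq> 0" using a by (intro bexI[of _ c]) auto
    show "\<forall>x\<in>{c..c+a}. (?u has_real_derivative ?u' x) (at x within {c..c+a})"
      using k by (auto intro!: derivative_eq_intros simp: algebra_simps)
    show "\<forall>x\<in>{c..c+a}. (?u' has_real_derivative ?u'' x) (at x within {c..c+a})"
      using k by (auto intro!: derivative_eq_intros simp: algebra_simps power2_eq_square)
    show "continuous_on {c..c+a} ?u''" by (intro continuous_intros)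
    show "\<forall>x\<in>{c..c+a}. - ?u'' x = k^2 * ?u x" by simp
    show "- ?u' c + alpha * ?u c = 0" by simp
    have "?u' (c + a) + alpha * ?u (c + a) = ?char / k"
      using k by (simp add: field_simps power2_eq_square)
    then show "?u' (c + a) + alpha * ?u (c + a) = 0" using char by simp
  qed
qed

lemma robin_eigenvalue_half_angle_iff:
  assumes a: "0 < a" and h: "0 < h"
  shows "robin_eigenvalue c a alpha ((2 * h / a)^2) \<longleftrightarrow>
           (a * alpha / 2 * cos h - h * sin h) * (a * alpha / 2 * sin h + h * cos h) = 0"
proof -
  have "(alpha^2 - (2 * h / a)^2) * sin (2 * h) + 2 * alpha * (2 * h / a) * cos (2 * h)
      = 8 / a^2 * ((a * alpha / 2 * cos h - h * sin h) * (a * alpha / 2 * sin h + h * cos h))"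
    unfolding sin_double cos_double using a by (simp add: field_simps power2_eq_square)
  then show ?thesis
    using robin_eigenvalue_sq_iff[of a "2 * h / a" c alpha] a h by simp
qed

lemma shifted_tan_root_exists:
  fixes p b :: real assumes p: "0 \<le> p" and b: "0 < b"
  obtains x where "0 < x" "x < pi/2" "(p + x) * sin x = b * cos x"
proof -
  define f where "f x = (p + x) * sin x - b * cos x" for x
  have "continuous_on {0..pi/2} f" unfolding f_def by (intro continuous_intros)
  moreover have "f 0 < 0" "0 < f (pi/2)" using p b by (simp_all add: f_def add_nonneg_pos)
  ultimately obtain x where "0 \<le> x" "x \<le> pi/2" "f x = 0"
    using IVT'[of f 0 0 "pi/2"] by auto
  moreover have "x \<noteq> 0" "x \<noteq> pi/2" using \<open>f 0 < 0\<close> \<open>0 < f (pi/2)\<close> \<open>f x = 0\<close> by fastforce+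
  ultimately show thesis by (intro that[of x]) (auto simp: f_def)
qed

lemma shifted_tan_root_unique:
  fixes p b x y :: real
  assumes p: "0 \<le> p" and x: "0 < x" "x < pi/2" and y: "0 < y" "y < pi/2"
    and "(p + x) * sin x = b * cos x" "(p + y) * sin y = b * cos y"
  shows "x = y"
proof -
  \<comment> \<open>Both are roots of the strictly increasing function \<open>(p + t) tan t - b\<close>.\<close>
  have tan_eq: "(p + x) * tan x = b" "(p + y) * tan y = b"
    using assms cos_gt_zero[of x] cos_gt_zero[of y] by (simp_all add: tan_def field_simps)
  have "(p + s) * tan s < (p + t) * tan t" if "0 < s" "s < t" "t < pi/2" for s t
    using that p tan_monotone[of s t] tan_gt_zero[of s] by (intro mult_strict_mono) auto
  then show ?thesis using tan_eq x y by (metis linorder_neqE_linordered_idom less_irrefl)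
qed

lemma half_angle_char_root_shift:
  fixes b h :: real
  assumes b: "0 < b" and h: "0 < h" "h < pi"
    and char: "(b * cos h - h * sin h) * (b * sin h + h * cos h) = 0"
  obtains p where "p = 0 \<or> p = pi/2" "0 < h - p" "h - p < pi/2" "h * sin (h - p) = b * cos (h - p)"
proof (cases "h < pi/2")
  case True
  have "0 < b * sin h + h * cos h"
    using b h True sin_gt_zero[of h] cos_gt_zero[of h] by (simp add: add_pos_pos)
  then have "h * sin h = b * cos h" using char by simp
  then show thesis using that[of 0] h True by simp
next
  case False
  have "cos h \<le> 0" using h False cos_monotone_0_pi_le[of "pi/2" h] by simp
  then have "b * cos h \<le> 0" using b by (simp add: mult_nonneg_nonpos)
  then have "b * cos h < h * sin h" using h sin_gt_zero[of h] by (smt (verit) mult_pos_pos)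
  then have "h * cos h = - b * sin h" using char by simp
  moreover have "h \<noteq> pi/2" using calculation b h sin_gt_zero[of h] by force
  ultimately show thesis using that[of "pi/2"] h False by (simp add: sin_diff cos_diff)
qed

lemma the_second_least_eq:
  fixes P :: "'a::linorder \<Rightarrow> bool"
  assumes y: "P y" and below_y: "{z. P z \<and> z < y} = {x}"
  shows "(THE y. P y \<and> card {z. P z \<and> z < y} = 1) = y"
proof (rule the_equality)
  show "P y \<and> card {z. P z \<and> z < y} = 1" using y by (simp add: below_y)
next
  fix y' assume y': "P y' \<and> card {z. P z \<and> z < y'} = 1"
  then obtain z where z: "{w. P w \<and> w < y'} = {z}" by (metis card_1_singletonE)
  have "x \<in> {z. P z \<and> z < y}" by (simp add: below_y)
  then have x: "P x" "x < y" by simp_all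
  show "y' = y"
  proof (rule linorder_cases[of y' y])
    assume "y' < y"
    then have "y' \<in> {z. P z \<and> z < y}" using y' by simp
    then have "y' = x" by (simp add: below_y)
    have "z \<in> {w. P w \<and> w < y'}" by (simp add: z)
    then have "z \<in> {w. P w \<and> w < y}" using \<open>y' < y\<close> less_trans by auto
    then have "z = x" by (simp add: below_y)
    then show ?thesis using \<open>y' = x\<close> \<open>z \<in> {w. P w \<and> w < y'}\<close> by simp
  next
    assume "y < y'"
    then have "x \<in> {w. P w \<and> w < y'}" "y \<in> {w. P w \<and> w < y'}" using x y by auto
    then show ?thesis using z x by simp
  qed
qed

lemma robin_eigenvalues_below_second:
  fixes c a alpha h1 r :: real
  assumes a: "0 < a" and alpha: "0 < alpha"
    and h1: "0 < h1" "h1 < pi/2" "h1 * sin h1 = a * alpha / 2 * cos h1"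
    and r: "0 < r" "r < pi/2" "(pi/2 + r) * sin r = a * alpha / 2 * cos r"
  shows "{mu. robin_eigenvalue c a alpha mu \<and> mu < ((pi + 2*r) / a)^2} = {(2 * h1 / a)^2}"
proof (intro equalityI subsetI)
  define b where "b = a * alpha / 2"
  have b: "0 < b" using a alpha by (simp add: b_def)
  fix mu assume "mu \<in> {mu. robin_eigenvalue c a alpha mu \<and> mu < ((pi + 2*r) / a)^2}"
  then have ev: "robin_eigenvalue c a alpha mu" and below: "mu < ((pi + 2*r) / a)^2" by auto
  define h where "h = a * sqrt mu / 2"
  have "0 < mu" using robin_eigenvalue_pos[OF a alpha ev] .
  then have mu: "mu = (2 * h / a)^2" and "0 < h" using a by (simp_all add: h_def)
  have "(2 * h / a)^2 < ((pi + 2*r) / a)^2" using below unfolding mu .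
  moreover have "0 \<le> (pi + 2*r) / a" using a r by simp
  ultimately have "2 * h / a < (pi + 2*r) / a" by (rule power_less_imp_less_base)
  then have "h < pi/2 + r" using a by (simp add: field_simps)
  moreover have "(b * cos h - h * sin h) * (b * sin h + h * cos h) = 0"
    using ev robin_eigenvalue_half_angle_iff[OF a \<open>0 < h\<close>] unfolding mu b_def by simp
  ultimately obtain p where p: "p = 0 \<or> p = pi/2" "0 < h - p" "h - p < pi/2"
    "h * sin (h - p) = b * cos (h - p)"
    using half_angle_char_root_shift[OF b \<open>0 < h\<close>] r by auto
  show "mu \<in> {(2 * h1 / a)^2}"
  proof (cases "p = 0")
    case True
    then have "h = h1" using shifted_tan_root_unique[of 0 h h1 b] p h1 by (simp add: b_def)
    then show ?thesis using mu by simp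
  next
    case False
    with p(1) have "p = pi/2" by simp
    have "h - pi/2 = r"
    proof (rule shifted_tan_root_unique[where p = "pi/2" and b = b])
      show "(pi/2 + (h - pi/2)) * sin (h - pi/2) = b * cos (h - pi/2)"
        using p(4) \<open>p = pi/2\<close> by simp
      show "(pi/2 + r) * sin r = b * cos r" using r(3) by (simp add: b_def)
    qed (use p(2,3) \<open>p = pi/2\<close> r in auto)
    then show ?thesis using \<open>h < pi/2 + r\<close> by simp
  qed
next
  fix mu assume "mu \<in> {(2 * h1 / a)^2}"
  then have mu: "mu = (2 * h1 / a)^2" by simp
  have "robin_eigenvalue c a alpha mu"
    unfolding mu robin_eigenvalue_half_angle_iff[OF a h1(1)] using h1 by simp
  moreover have "2 * h1 / a < (pi + 2*r) / a" using a h1 r by (simp add: divide_strict_right_mono)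
  then have "mu < ((pi + 2*r) / a)^2" unfolding mu using h1 a by (intro power_strict_mono) auto
  ultimately show "mu \<in> {mu. robin_eigenvalue c a alpha mu \<and> mu < ((pi + 2*r) / a)^2}" by simp
qed

lemma robin_lambda2_eq:
  fixes c a alpha :: real
  assumes a: "0 < a" and alpha: "0 < alpha"
  obtains r where "0 < r" "r < pi/2" "a * alpha * cos r = (pi + 2*r) * sin r"
    "robin_lambda2 c a alpha = ((pi + 2*r) / a)^2"
proof -
  have b: "0 < a * alpha / 2" using a alpha by simp
  obtain h1 where h1: "0 < h1" "h1 < pi/2" "(0 + h1) * sin h1 = a * alpha / 2 * cos h1"
    using shifted_tan_root_exists[OF order.refl b] .
  obtain r where r: "0 < r" "r < pi/2" "(pi/2 + r) * sin r = a * alpha / 2 * cos r"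
    using shifted_tan_root_exists[OF _ b, of "pi/2"] by auto
  have "a * alpha / 2 * sin (pi/2 + r) + (pi/2 + r) * cos (pi/2 + r) = 0"
    using r(3) by (simp add: sin_add cos_add)
  then have "robin_eigenvalue c a alpha ((2 * (pi/2 + r) / a)^2)"
    using robin_eigenvalue_half_angle_iff[OF a, of "pi/2 + r" c alpha] r by (simp add: add_pos_pos)
  moreover have "{mu. robin_eigenvalue c a alpha mu \<and> mu < ((pi + 2*r) / a)^2} = {(2 * h1 / a)^2}"
    using robin_eigenvalues_below_second[OF a alpha _ _ _ r] h1 by simp
  ultimately have "robin_lambda2 c a alpha = ((pi + 2*r) / a)^2"
    unfolding robin_lambda2_def by (intro the_second_least_eq) (simp_all add: algebra_simps)
  then show thesis using that[of r] r by (simp add: algebra_simps)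
qed

lemma char_root_lower_bound:
  fixes a alpha r :: real
  assumes a: "0 < a" and alpha: "0 < alpha" and r: "0 < r" "r < pi/2"
    and char: "a * alpha * cos r = (pi + 2*r) * sin r"
  shows "(2*pi - a*alpha + sqrt (4*pi^2 + 12*a*alpha*pi + alpha^2*a^2))^2 / (16*a^2)
           \<le> ((pi + 2*r) / a)^2"
proof -
  define m where "m = a * alpha"
  have "0 < m" using a alpha by (simp add: m_def)
  have "m * (pi - 2*r) * cos r = (pi - 2*r) * (a * alpha * cos r)" by (simp add: m_def)
  also have "\<dots> = 2 * (pi + 2*r) * ((pi/2 - r) * sin r)" unfolding char by (simp add: algebra_simps)
  also have "\<dots> \<le> 2 * (pi + 2*r) * (2 * r * cos r)"
    using pi_half_minus_x_sin_le_2x_cos[OF r] r by (intro mult_left_mono) auto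
  finally have "m * (pi - 2*r) * cos r \<le> (4 * r * (pi + 2*r)) * cos r" by (simp add: algebra_simps)
  then have key: "m * (pi - 2*r) \<le> 4 * r * (pi + 2*r)" using cos_gt_zero[of r] r by simp
  define D where "D = 4*pi^2 + 12*m*pi + m^2"
  have "(2*pi + 8*r + m)^2 - D = 8 * (4 * r * (pi + 2*r) - m * (pi - 2*r))"
    by (simp add: D_def power2_eq_square algebra_simps)
  then have "sqrt D \<le> 2*pi + 8*r + m"
    using key r \<open>0 < m\<close> by (intro real_le_lsqrt) auto
  moreover have "(m - 2*pi)^2 \<le> D"
    using \<open>0 < m\<close> by (simp add: D_def power2_eq_square algebra_simps)
  then have "m - 2*pi \<le> sqrt D" by (rule real_le_rsqrt)
  ultimately have "(2*pi - m + sqrt D)^2 \<le> (4 * (pi + 2*r))^2" by (intro power_mono) auto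
  then have "(2*pi - m + sqrt D)^2 / (16*a^2) \<le> (4 * (pi + 2*r))^2 / (16*a^2)"
    by (intro divide_right_mono) auto
  also have "\<dots> = ((pi + 2*r) / a)^2" using a by (simp add: power2_eq_square field_simps)
  finally show ?thesis by (simp add: D_def m_def power2_eq_square algebra_simps)
qed

lemma char_root_upper_bound_small_coupling:
  fixes a alpha r :: real
  assumes a: "0 < a" and r: "0 < r" "r < pi/2"
    and char: "a * alpha * cos r = (pi + 2*r) * sin r"
  shows "((pi + 2*r) / a)^2 \<le> (pi/(2*a) + sqrt (pi^2/(4*a^2) + 2*alpha/a))^2"
proof -
  have "(pi + 2*r) * (r * cos r) \<le> (pi + 2*r) * sin r"
    using x_cos_le_sin[of r] r by (intro mult_left_mono) auto
  then have "(r * (pi + 2*r)) * cos r \<le> (a * alpha) * cos r" unfolding char by (simp add: algebra_simps)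
  then have key: "r * (pi + 2*r) \<le> a * alpha" using cos_gt_zero[of r] r by simp
  have "((pi/2 + 2*r) / a)^2 = (pi^2/4 + 2 * (r * (pi + 2*r))) / a^2"
    by (simp add: power2_eq_square field_simps)
  also have "\<dots> \<le> (pi^2/4 + 2 * (a * alpha)) / a^2" using key by (intro divide_right_mono) auto
  also have "\<dots> = pi^2/(4*a^2) + 2*alpha/a" using a by (simp add: power2_eq_square field_simps)
  finally have "(pi/2 + 2*r) / a \<le> sqrt (pi^2/(4*a^2) + 2*alpha/a)" by (rule real_le_rsqrt)
  moreover have "(pi + 2*r) / a = pi/(2*a) + (pi/2 + 2*r) / a" using a by (simp add: field_simps)
  ultimately show ?thesis using a r by (intro power_mono) auto
qed

lemma char_root_upper_bound_large_coupling:
  fixes a alpha r :: real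
  assumes a: "0 < a" and alpha: "0 < alpha" and r: "0 < r" "r < pi/2"
    and char: "a * alpha * cos r = (pi + 2*r) * sin r"
  shows "((pi + 2*r) / a)^2
           \<le> pi^2/(16*a^4*alpha^2) * (4*a*alpha - pi^2 + sqrt (pi^4 + 16*a^2*alpha^2))^2"
proof -
  define m where "m = a * alpha"
  have "0 < m" using a alpha by (simp add: m_def)
  have "pi^3 * r * cos r \<le> (pi^2 - 4*r^2) * (m * cos r)"
    using pi_cube_x_cos_le_poly_sin[OF r] char unfolding m_def by (simp add: algebra_simps)
  then have "(r * pi^3) * cos r \<le> (m * (pi^2 - 4*r^2)) * cos r" by (simp add: algebra_simps)
  then have key: "r * pi^3 \<le> m * (pi^2 - 4*r^2)" using cos_gt_zero[of r] r by simp
  define S where "S = sqrt (pi^4 + 16*m^2)"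
  have "pi^2 * (pi^4 + 16*m^2) - (8*m*r + pi^3)^2 = 16 * m * (m * (pi^2 - 4*r^2) - r * pi^3)"
    by (simp add: power2_eq_square power3_eq_cube power4_eq_xxxx algebra_simps)
  moreover have "0 \<le> 16 * m * (m * (pi^2 - 4*r^2) - r * pi^3)" using key \<open>0 < m\<close> by simp
  ultimately have "(8*m*r + pi^3)^2 \<le> pi^2 * (pi^4 + 16*m^2)" by linarith
  then have "8*m*r + pi^3 \<le> sqrt (pi^2 * (pi^4 + 16*m^2))" by (rule real_le_rsqrt)
  then have "8*m*r + pi^3 \<le> pi * S" by (simp add: S_def real_sqrt_mult)
  then have "4*m*(pi + 2*r) \<le> pi * (4*m - pi^2 + S)"
    by (simp add: algebra_simps power2_eq_square power3_eq_cube)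
  then have "4*m*(pi + 2*r) / (4*a*m) \<le> pi * (4*m - pi^2 + S) / (4*a*m)"
    using a \<open>0 < m\<close> by (intro divide_right_mono) auto
  then have "(pi + 2*r) / a \<le> pi * (4*m - pi^2 + S) / (4*a*m)" using \<open>0 < m\<close> by simp
  then have "((pi + 2*r) / a)^2 \<le> (pi * (4*m - pi^2 + S) / (4*a*m))^2"
    using a r by (intro power_mono) auto
  also have "\<dots> = pi^2/(16*a^4*alpha^2) * (4*m - pi^2 + S)^2"
    using a alpha by (simp add: m_def power2_eq_square power4_eq_xxxx field_simps)
  also have "S = sqrt (pi^4 + 16*a^2*alpha^2)" by (simp add: S_def m_def power_mult_distrib)
  finally show ?thesis by (simp add: m_def mult.assoc)
qed

theorem propositionA2:
  fixes c a alpha :: real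
  assumes "a > 0" and "alpha > 0"
  shows "(2*pi - a*alpha + sqrt (4*pi^2 + 12*a*alpha*pi + alpha^2*a^2))^2 / (16*a^2)
           \<le> robin_lambda2 c a alpha
    \<and> (a*alpha \<le> pi^2/2 \<longrightarrow>
           robin_lambda2 c a alpha \<le> (pi/(2*a) + sqrt (pi^2/(4*a^2) + 2*alpha/a))^2)
    \<and> (a*alpha \<ge> pi^2/2 \<longrightarrow>
           robin_lambda2 c a alpha
             \<le> pi^2/(16*a^4*alpha^2) * (4*a*alpha - pi^2 + sqrt (pi^4 + 16*a^2*alpha^2))^2)"
proof -
  obtain r where r: "0 < r" "r < pi/2" and char: "a * alpha * cos r = (pi + 2*r) * sin r"
    and lambda2: "robin_lambda2 c a alpha = ((pi + 2*r) / a)^2"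
    using robin_lambda2_eq[OF assms, of c] .
  show ?thesis
    unfolding lambda2
    using char_root_lower_bound[OF assms r char]
      char_root_upper_bound_small_coupling[OF assms(1) r char]
      char_root_upper_bound_large_coupling[OF assms r char]
    by simp
qed

end
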